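(* There exist a separable metrizable $g$-reversible topological group $G$ and a closed subgroup $H$ of $G$ such that $H$ is countable and precompact and $H$ (with the subspace topology) is not $g$-reversible.
   Context: All topological groups are assumed Hausdorff. A topological group $G$ is called $g$-reversible if every continuous automorphism of $G$ (i.e. every continuous group isomorphism of $G$ onto itself) is an open map. A topological group is precompact if for every neighbourhood $U$ of the identity there is a finite $F$ with $FU=G$. *)

theory Defs
  imports "HOL-Analysis.Analysis" "HOL-Algebra.Coset"
begin

definition topological_group :: "('a, 'b) monoid_scheme \<Rightarrow> 'a topology \<Rightarrow> bool" where
  "topological_group G T \<longleftrightarrow>
     group G \<and> topspace T = carrier G \<and> Hausdorff_space T \<and>
     continuous_map (prod_topology T T) T (\<lambda>(x, y). x \<otimes>\<^bsub>G\<^esub> y) \<and>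
     continuous_map T T (\<lambda>x. inv\<^bsub>G\<^esub> x)"

definition g_reversible :: "('a, 'b) monoid_scheme \<Rightarrow> 'a topology \<Rightarrow> bool" where
  "g_reversible G T \<longleftrightarrow>
     (\<forall>f. f \<in> iso G G \<and> continuous_map T T f \<longrightarrow> open_map T T f)"

definition precompact_group :: "('a, 'b) monoid_scheme \<Rightarrow> 'a topology \<Rightarrow> bool" where
  "precompact_group G T \<longleftrightarrow>
     (\<forall>U. U \<subseteq> carrier G \<and> (\<exists>V. openin T V \<and> \<one>\<^bsub>G\<^esub> \<in> V \<and> V \<subseteq> U) \<longrightarrow>
        (\<exists>F. finite F \<and> F \<subseteq> carrier G \<and> F <#>\<^bsub>G\<^esub> U = carrier G))"

end

theory Submission
  imports Defs
begin

text \<open>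
  Let \<open>G\<close> be the direct sum of the groups \<open>\<int>/2^(j+1)\<close>, \<open>j \<in> \<nat>\<close>, with the group topology in
  which the subgroups \<open>2^n G\<close> form a neighbourhood base of \<open>0\<close>. An element \<open>y\<close> lies in
  \<open>x + 2^n G\<close> iff all entries of \<open>x\<close> and \<open>y\<close> agree modulo \<open>2^n\<close>, so the topology is induced by
  the truncation maps into a countable product of discrete spaces; hence \<open>G\<close> is metrizable, and it
  is separable because it is countable. Every automorphism \<open>f\<close> satisfies \<open>f(2^n G) = 2^n G\<close> and
  therefore maps basic neighbourhoods onto basic neighbourhoods: it is open.

  The elements of order two form a closed subgroup \<open>H\<close>, the direct sum of copies of \<open>\<int>/2\<close>, and
  \<open>H \<inter> 2^n G\<close> consists of the elements of \<open>H\<close> supported in \<open>[n, \<infinity>)\<close>, so \<open>H\<close> carries the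
  precompact product topology. The automorphism \<open>(x\<^sub>j) \<mapsto> (x\<^sub>j + x\<^sub>j\<^sub>+\<^sub>1)\<close> of \<open>H\<close> is continuous
  but not open: the only preimage of the indicator of \<open>{n}\<close>, which tends to \<open>0\<close>, is the indicator
  of \<open>{0, \<dots>, n}\<close>, which lies outside the neighbourhood \<open>{x. x\<^sub>0 = 0}\<close> of \<open>0\<close>.

  An injection of \<open>G\<close> into \<open>\<real>\<close> transports the whole configuration to the reals.
\<close>

section \<open>Topological isomorphisms and transport of structure\<close>

definition topological_group_isomorphisms ::
    "('a, 'c) monoid_scheme \<Rightarrow> 'a topology \<Rightarrow> ('b, 'd) monoid_scheme \<Rightarrow> 'b topology \<Rightarrow>
     ('a \<Rightarrow> 'b) \<Rightarrow> ('b \<Rightarrow> 'a) \<Rightarrow> bool" where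
  "topological_group_isomorphisms G T G' T' f g \<longleftrightarrow>
     group_isomorphisms G G' f g \<and> homeomorphic_maps T T' f g"

lemma topological_group_isomorphisms_sym:
  "topological_group_isomorphisms G T G' T' f g \<Longrightarrow> topological_group_isomorphisms G' T' G T g f"
  unfolding topological_group_isomorphisms_def
  by (simp add: group_isomorphisms_sym homeomorphic_maps_sym[of T])

lemma topological_group_isomorphisms_restrict:
  assumes iso: "topological_group_isomorphisms G T G' T' f g" and H: "H \<subseteq> carrier G"
  shows "topological_group_isomorphisms (G\<lparr>carrier := H\<rparr>) (subtopology T H)
           (G'\<lparr>carrier := f ` H\<rparr>) (subtopology T' (f ` H)) f g"
proof -
  have gi: "group_isomorphisms G G' f g" and hm: "homeomorphic_maps T T' f g"
    using iso by (auto simp: topological_group_isomorphisms_def)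
  have gf: "g (f x) = x" if "x \<in> H" for x
    using gi H that by (auto simp: group_isomorphisms_def)
  have "group_isomorphisms (G\<lparr>carrier := H\<rparr>) (G'\<lparr>carrier := f ` H\<rparr>) f g"
    using gi H gf by (auto simp: group_isomorphisms_def hom_def Pi_iff subset_iff image_iff)
  moreover have "homeomorphic_maps (subtopology T H) (subtopology T' (f ` H)) f g"
    using gf by (intro homeomorphic_maps_subtopologies_alt[OF hm]) auto
  ultimately show ?thesis
    by (simp add: topological_group_isomorphisms_def)
qed

lemma topological_group_transfer:
  assumes iso: "topological_group_isomorphisms G T G' T' f g"
    and tg: "topological_group G T" and "monoid G'"
  shows "topological_group G' T'"
proof -
  have gi: "group_isomorphisms G G' f g" and hm: "homeomorphic_maps T T' f g"
    using iso by (auto simp: topological_group_isomorphisms_def)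
  interpret G: group G
    using tg by (simp add: topological_group_def)
  have f: "f \<in> iso G G'"
    using gi by (rule group_isomorphisms_imp_iso)
  interpret G': group G'
    using G.iso_imp_group f \<open>monoid G'\<close> by (auto simp: is_iso_def)
  interpret fh: group_hom G G' f
    using gi G.group_axioms G'.group_axioms
    by (simp add: group_hom_def group_hom_axioms_def group_isomorphisms_def)
  have top: "topspace T' = carrier G'"
  proof -
    have "topspace T' = f ` topspace T"
      using hm by (metis homeomorphic_imp_surjective_map homeomorphic_maps_map)
    also have "\<dots> = carrier G'"
      using tg f by (simp add: topological_group_def iso_def bij_betw_def)
    finally show ?thesis .
  qed
  have g_cont: "continuous_map T' T g" and f_cont: "continuous_map T T' f"
    using hm by (auto simp: homeomorphic_maps_def)
  have g_car: "g y \<in> carrier G" and fg: "f (g y) = y" if "y \<in> carrier G'" for y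
    using gi that by (auto simp: group_isomorphisms_def hom_def)
  have "continuous_map (prod_topology T' T') T' (f \<circ> (\<lambda>(x, y). x \<otimes>\<^bsub>G\<^esub> y) \<circ> (\<lambda>(x, y). (g x, g y)))"
    using tg f_cont g_cont
    by (intro continuous_map_compose) (auto simp: topological_group_def continuous_map_prod_top)
  then have mult: "continuous_map (prod_topology T' T') T' (\<lambda>(x, y). x \<otimes>\<^bsub>G'\<^esub> y)"
    by (rule continuous_map_eq) (auto simp: top g_car fg)
  have "continuous_map T' T' (f \<circ> (\<lambda>x. inv\<^bsub>G\<^esub> x) \<circ> g)"
    using tg f_cont g_cont by (intro continuous_map_compose) (auto simp: topological_group_def)
  then have inv: "continuous_map T' T' (\<lambda>x. inv\<^bsub>G'\<^esub> x)"
    by (rule continuous_map_eq) (auto simp: top g_car fg)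
  have "Hausdorff_space T'"
    using tg hm homeomorphic_Hausdorff_space
    by (auto simp: topological_group_def homeomorphic_space_def)
  then show ?thesis
    unfolding topological_group_def using G'.group_axioms top mult inv by blast
qed

lemma g_reversible_transfer:
  assumes iso: "topological_group_isomorphisms G T G' T' f g" and rev: "g_reversible G T"
  shows "g_reversible G' T'"
  unfolding g_reversible_def
proof (intro allI impI, elim conjE)
  fix a assume a: "a \<in> iso G' G'" "continuous_map T' T' a"
  have gi: "group_isomorphisms G G' f g" and hm: "homeomorphic_maps T T' f g"
    using iso by (auto simp: topological_group_isomorphisms_def)
  have "g \<circ> a \<circ> f \<in> iso G G"
    using gi a(1) by (meson group_isomorphisms_imp_iso group_isomorphisms_sym iso_set_trans)
  moreover have "continuous_map T T (g \<circ> a \<circ> f)"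
    using hm a(2) by (auto simp: homeomorphic_maps_def intro: continuous_map_compose)
  ultimately have "open_map T T (g \<circ> a \<circ> f)"
    using rev unfolding g_reversible_def by blast
  then have "open_map T' T' (f \<circ> (g \<circ> a \<circ> f) \<circ> g)"
    using hm by (meson homeomorphic_imp_open_map homeomorphic_maps_map open_map_compose)
  then show "open_map T' T' a"
    by (rule open_map_eq) (use hm a(2) in \<open>auto simp: homeomorphic_maps_map continuous_map_def\<close>)
qed

lemma g_reversible_transfer_iff:
  "topological_group_isomorphisms G T G' T' f g \<Longrightarrow> g_reversible G T \<longleftrightarrow> g_reversible G' T'"
  by (meson g_reversible_transfer topological_group_isomorphisms_sym)

lemma precompact_group_transfer:
  assumes iso: "topological_group_isomorphisms G T G' T' f g" and "group G" "group G'"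
    and pre: "precompact_group G T"
  shows "precompact_group G' T'"
  unfolding precompact_group_def
proof (intro allI impI, elim conjE exE)
  fix U V assume U: "U \<subseteq> carrier G'" and V: "openin T' V" "\<one>\<^bsub>G'\<^esub> \<in> V" "V \<subseteq> U"
  have gi: "group_isomorphisms G G' f g" and hm: "homeomorphic_maps T T' f g"
    using iso by (auto simp: topological_group_isomorphisms_def)
  have f: "f \<in> hom G G'" and g: "g \<in> hom G' G"
    using gi by (auto simp: group_isomorphisms_def)
  have "g ` U \<subseteq> carrier G"
    using g U by (auto simp: hom_def)
  moreover have "openin T (g ` V)"
    using hm V(1) by (meson homeomorphic_imp_open_map homeomorphic_maps_map open_map_def)
  moreover have "\<one>\<^bsub>G\<^esub> \<in> g ` V"
    using V(2) hom_one[OF g \<open>group G'\<close> \<open>group G\<close>] by (metis image_eqI)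
  ultimately obtain F where F: "finite F" "F \<subseteq> carrier G" "F <#>\<^bsub>G\<^esub> g ` U = carrier G"
    using pre V(3) unfolding precompact_group_def by (meson image_mono)
  have fg: "f (g y) = y" if "y \<in> carrier G'" for y
    using gi that by (auto simp: group_isomorphisms_def)
  have "f ` F <#>\<^bsub>G'\<^esub> U = f ` F <#>\<^bsub>G'\<^esub> f ` g ` U"
    using U fg by (simp add: image_image subset_iff cong: image_cong)
  also have "\<dots> = f ` carrier G"
    using set_mult_hom[OF f F(2) \<open>g ` U \<subseteq> carrier G\<close>] F(3) by simp
  also have "\<dots> = carrier G'"
    using group_isomorphisms_imp_iso[OF gi] by (simp add: iso_def bij_betw_def)
  finally show "\<exists>F'. finite F' \<and> F' \<subseteq> carrier G' \<and> F' <#>\<^bsub>G'\<^esub> U = carrier G'"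
    using F f by (intro exI[of _ "f ` F"]) (auto simp: hom_def)
qed

lemma homeomorphic_map_pullback_topology:
  assumes "inj_on f A" "f ` A \<subseteq> topspace T"
  shows "homeomorphic_map (pullback_topology A f T) (subtopology T (f ` A)) f"
proof (rule bijective_open_imp_homeomorphic_map)
  show "continuous_map (pullback_topology A f T) (subtopology T (f ` A)) f"
    using continuous_map_pullback[OF continuous_map_id, of A f]
    by (auto simp: continuous_map_in_subtopology topspace_pullback_topology)
  show "open_map (pullback_topology A f T) (subtopology T (f ` A)) f"
    unfolding open_map_def openin_pullback_topology
  proof (intro allI impI, elim exE conjE)
    fix U V assume "openin T V" "U = f -` V \<inter> A"
    moreover have "f ` U = f ` A \<inter> V"
      using \<open>U = f -` V \<inter> A\<close> by auto
    ultimately show "openin (subtopology T (f ` A)) (f ` U)"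
      by (simp add: openin_subtopology_Int2)
  qed
  show "f ` topspace (pullback_topology A f T) = topspace (subtopology T (f ` A))"
    using assms(2) by (auto simp: topspace_pullback_topology)
  show "inj_on f (topspace (pullback_topology A f T))"
    using assms(1) by (rule inj_on_subset) (simp add: topspace_pullback_topology)
qed

definition transfer_monoid :: "('a \<Rightarrow> 'b) \<Rightarrow> ('a, 'c) monoid_scheme \<Rightarrow> 'b monoid" where
  "transfer_monoid e G =
     \<lparr>carrier = e ` carrier G,
      mult = \<lambda>x y. e (inv_into (carrier G) e x \<otimes>\<^bsub>G\<^esub> inv_into (carrier G) e y),
      one = e \<one>\<^bsub>G\<^esub>\<rparr>"

definition transfer_topology :: "('a \<Rightarrow> 'b) \<Rightarrow> 'a topology \<Rightarrow> 'b topology" where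
  "transfer_topology e T = pullback_topology (e ` topspace T) (inv_into (topspace T) e) T"

lemma monoid_transfer_monoid:
  assumes "monoid G" "inj_on e (carrier G)"
  shows "monoid (transfer_monoid e G)"
proof -
  interpret monoid G by fact
  have "inv_into (carrier G) e (e x) = x" if "x \<in> carrier G" for x
    using assms(2) that by simp
  then show ?thesis
    by (intro monoidI) (auto simp: transfer_monoid_def m_assoc)
qed

lemma topological_group_isomorphisms_transfer:
  assumes "monoid G" "topspace T = carrier G" "inj_on e (carrier G)"
  shows "topological_group_isomorphisms G T (transfer_monoid e G) (transfer_topology e T)
           e (inv_into (carrier G) e)"
proof -
  interpret monoid G by fact
  let ?d = "inv_into (carrier G) e"
  have de: "?d (e x) = x" if "x \<in> carrier G" for x
    using assms(3) that by simp
  have "group_isomorphisms G (transfer_monoid e G) e ?d"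
    by (auto simp: group_isomorphisms_def hom_def transfer_monoid_def de inv_into_into)
  moreover have "homeomorphic_maps T (transfer_topology e T) e ?d"
    unfolding homeomorphic_maps_def transfer_topology_def assms(2)
  proof (intro conjI ballI)
    have "continuous_map T T (?d \<circ> e)"
      by (rule continuous_map_eq[OF continuous_map_id]) (simp add: assms(2) de)
    then show "continuous_map T (pullback_topology (e ` carrier G) ?d T) e"
      using assms(2) by (intro continuous_map_pullback') auto
    show "continuous_map (pullback_topology (e ` carrier G) ?d T) T ?d"
      using continuous_map_pullback[OF continuous_map_id] by (simp add: comp_def)
  qed (auto simp: assms(2) de topspace_pullback_topology)
  ultimately show ?thesis
    by (simp add: topological_group_isomorphisms_def)
qed

lemma real_copy_of_countable_group:
  assumes "monoid G" "topspace T = carrier G" "countable (carrier G)"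
  obtains G' :: "real monoid" and T' f g
  where "monoid G'" "topological_group_isomorphisms G T G' T' f g"
proof -
  have "inj_on (real \<circ> to_nat_on (carrier G)) (carrier G)"
    using assms(3) by (simp add: inj_on_def)
  then show thesis
    using assms(1,2) that monoid_transfer_monoid topological_group_isomorphisms_transfer by blast
qed

definition g_reversible_with_bad_subgroup ::
    "('a, 'b) monoid_scheme \<Rightarrow> 'a topology \<Rightarrow> 'a set \<Rightarrow> bool" where
  "g_reversible_with_bad_subgroup G T H \<longleftrightarrow>
     topological_group G T \<and> separable_space T \<and> metrizable_space T \<and> g_reversible G T \<and>
     subgroup H G \<and> closedin T H \<and> countable H \<and>
     precompact_group (G\<lparr>carrier := H\<rparr>) (subtopology T H) \<and>
     \<not> g_reversible (G\<lparr>carrier := H\<rparr>) (subtopology T H)"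

lemma g_reversible_with_bad_subgroup_transfer:
  assumes iso: "topological_group_isomorphisms G T G' T' f g" and "monoid G'"
    and bad: "g_reversible_with_bad_subgroup G T H"
  shows "g_reversible_with_bad_subgroup G' T' (f ` H)"
proof -
  have tg: "topological_group G T" and H: "subgroup H G"
    using bad by (auto simp: g_reversible_with_bad_subgroup_def)
  have isoH: "topological_group_isomorphisms (G\<lparr>carrier := H\<rparr>) (subtopology T H)
      (G'\<lparr>carrier := f ` H\<rparr>) (subtopology T' (f ` H)) f g"
    using topological_group_isomorphisms_restrict[OF iso subgroup.subset[OF H]] .
  have tg': "topological_group G' T'"
    using topological_group_transfer[OF iso tg \<open>monoid G'\<close>] .
  have f: "f \<in> hom G G'" and hm: "homeomorphic_map T T' f"
    using iso by (auto simp: topological_group_isomorphisms_def group_isomorphisms_def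
        homeomorphic_maps_map)
  have "group G" "group G'"
    using tg tg' by (simp_all add: topological_group_def)
  then have H': "subgroup (f ` H) G'"
    using f H
    by (intro group_hom.subgroup_img_is_subgroup) (auto simp: group_hom_def group_hom_axioms_def)
  have "closedin T' (f ` H)" "countable (f ` H)"
    using bad homeomorphic_map_closedness[OF hm] subgroup.subset[OF H]
    by (auto simp: g_reversible_with_bad_subgroup_def topological_group_def)
  moreover have "precompact_group (G'\<lparr>carrier := f ` H\<rparr>) (subtopology T' (f ` H))"
    using bad \<open>group G\<close> \<open>group G'\<close> H H'
    by (intro precompact_group_transfer[OF isoH]) (auto simp: g_reversible_with_bad_subgroup_def
        intro: subgroup.subgroup_is_group)
  moreover have "separable_space T' \<and> metrizable_space T' \<and> g_reversible G' T'"
    using bad homeomorphic_map_imp_homeomorphic_space[OF hm] g_reversible_transfer[OF iso]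
    by (auto simp: g_reversible_with_bad_subgroup_def homeomorphic_separable_space
        homeomorphic_metrizable_space)
  ultimately show ?thesis
    using tg' H' bad g_reversible_transfer_iff[OF isoH]
    by (simp add: g_reversible_with_bad_subgroup_def)
qed

definition two_torsion :: "('a, 'b) monoid_scheme \<Rightarrow> 'a set" where
  "two_torsion G = {x \<in> carrier G. x \<otimes>\<^bsub>G\<^esub> x = \<one>\<^bsub>G\<^esub>}"

lemma (in comm_group) subgroup_two_torsion: "subgroup (two_torsion G) G"
proof (rule subgroupI)
  show "two_torsion G \<subseteq> carrier G" "two_torsion G \<noteq> {}"
    by (auto simp: two_torsion_def)
  fix a b assume a: "a \<in> two_torsion G" and b: "b \<in> two_torsion G"
  then show "inv a \<in> two_torsion G"
    by (auto simp: two_torsion_def inv_mult_group[symmetric])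
  have "a \<otimes> b \<otimes> (a \<otimes> b) = a \<otimes> a \<otimes> (b \<otimes> b)"
    using a b by (simp add: two_torsion_def m_ac)
  then show "a \<otimes> b \<in> two_torsion G"
    using a b by (simp add: two_torsion_def)
qed

lemma closedin_two_torsion:
  assumes "topological_group G T"
  shows "closedin T (two_torsion G)"
proof -
  have T: "topspace T = carrier G" "Hausdorff_space T"
    and mult: "continuous_map (prod_topology T T) T (\<lambda>(x, y). x \<otimes>\<^bsub>G\<^esub> y)"
    and "group G"
    using assms by (auto simp: topological_group_def)
  have "continuous_map T T ((\<lambda>(x, y). x \<otimes>\<^bsub>G\<^esub> y) \<circ> (\<lambda>x. (x, x)))"
    by (rule continuous_map_compose[OF _ mult]) (simp add: continuous_map_pairwise comp_def)
  moreover have "continuous_map T T (\<lambda>x. \<one>\<^bsub>G\<^esub>)"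
    using T(1) \<open>group G\<close> by (simp add: group.is_monoid monoid.one_closed)
  ultimately have "closedin T {x \<in> topspace T. ((\<lambda>(x, y). x \<otimes>\<^bsub>G\<^esub> y) \<circ> (\<lambda>x. (x, x))) x = \<one>\<^bsub>G\<^esub>}"
    by (rule closedin_continuous_maps_eq[OF T(2)])
  then show ?thesis
    by (simp add: two_torsion_def T(1))
qed

section \<open>The direct sum of the groups \<open>\<int>/2^(j+1)\<close>\<close>

lemma take_bit_add_take_bit_left: "take_bit n (take_bit n a + b) = take_bit n (a + b :: int)"
  by (simp add: take_bit_eq_mod mod_add_left_eq)

lemma take_bit_add_take_bit_right: "take_bit n (a + take_bit n b) = take_bit n (a + b :: int)"
  by (simp add: take_bit_eq_mod mod_add_right_eq)

(* Entry j of an element is represented by its residue in [0, 2^(j+1)). *)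
definition dsum_carrier :: "(nat \<Rightarrow> int) set" where
  "dsum_carrier = {x. (\<forall>j. take_bit (Suc j) (x j) = x j) \<and> finite {j. x j \<noteq> 0}}"

definition dsum :: "(nat \<Rightarrow> int) monoid" where
  "dsum = \<lparr>carrier = dsum_carrier, mult = \<lambda>x y j. take_bit (Suc j) (x j + y j), one = \<lambda>j. 0\<rparr>"

lemma carrier_dsum [simp]: "carrier dsum = dsum_carrier"
  by (simp add: dsum_def)

lemma dsum_mult: "x \<otimes>\<^bsub>dsum\<^esub> y = (\<lambda>j. take_bit (Suc j) (x j + y j))"
  by (simp add: dsum_def)

lemma dsum_one: "\<one>\<^bsub>dsum\<^esub> = (\<lambda>j. 0)"
  by (simp add: dsum_def)

lemma dsum_carrierI:
  assumes "\<And>j. take_bit (Suc j) (x j) = x j" "finite {j. x j \<noteq> 0}"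
  shows "x \<in> dsum_carrier"
  using assms by (simp add: dsum_carrier_def)

lemma finite_support_dsum_carrier: "x \<in> dsum_carrier \<Longrightarrow> finite {j. x j \<noteq> 0}"
  by (simp add: dsum_carrier_def)

lemma dsum_carrier_take_bit: "x \<in> dsum_carrier \<Longrightarrow> take_bit (Suc j) (x j) = x j"
  by (simp add: dsum_carrier_def)

lemma dsum_carrier_take_bit_eta [simp]: "x \<in> dsum_carrier \<Longrightarrow> (\<lambda>j. take_bit (Suc j) (x j)) = x"
  by (simp add: dsum_carrier_take_bit)

lemma dsum_carrier_smult:
  assumes "x \<in> dsum_carrier"
  shows "(\<lambda>j. take_bit (Suc j) (c * x j)) \<in> dsum_carrier"
proof (rule dsum_carrierI)
  show "finite {j. take_bit (Suc j) (c * x j) \<noteq> 0}"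
    by (rule finite_subset[OF _ finite_support_dsum_carrier[OF assms]]) auto
qed simp

lemma comm_group_dsum: "comm_group dsum"
proof (rule groupI[THEN group.group_comm_groupI])
  fix x y assume "x \<in> carrier dsum" "y \<in> carrier dsum"
  then have "finite ({j. x j \<noteq> 0} \<union> {j. y j \<noteq> 0})"
    by (simp add: finite_support_dsum_carrier)
  then have "finite {j. take_bit (Suc j) (x j + y j) \<noteq> 0}"
    by (rule finite_subset[rotated]) auto
  then show "x \<otimes>\<^bsub>dsum\<^esub> y \<in> carrier dsum"
    by (simp add: dsum_mult dsum_carrierI)
next
  fix x y z assume "x \<in> carrier dsum" "y \<in> carrier dsum" "z \<in> carrier dsum"
  show "x \<otimes>\<^bsub>dsum\<^esub> y \<otimes>\<^bsub>dsum\<^esub> z = x \<otimes>\<^bsub>dsum\<^esub> (y \<otimes>\<^bsub>dsum\<^esub> z)"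
    by (simp add: dsum_mult take_bit_add_take_bit_left take_bit_add_take_bit_right add.assoc)
next
  fix x assume x: "x \<in> carrier dsum"
  show "\<exists>y\<in>carrier dsum. y \<otimes>\<^bsub>dsum\<^esub> x = \<one>\<^bsub>dsum\<^esub>"
  proof
    show "(\<lambda>j. take_bit (Suc j) (-1 * x j)) \<in> carrier dsum"
      using x by (simp only: carrier_dsum dsum_carrier_smult)
    show "(\<lambda>j. take_bit (Suc j) (-1 * x j)) \<otimes>\<^bsub>dsum\<^esub> x = \<one>\<^bsub>dsum\<^esub>"
      by (simp add: dsum_mult dsum_one take_bit_add_take_bit_left)
  qed
next
  show "\<one>\<^bsub>dsum\<^esub> \<in> carrier dsum"
    by (simp add: dsum_one dsum_carrierI)
next
  fix x assume "x \<in> carrier dsum"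
  then show "\<one>\<^bsub>dsum\<^esub> \<otimes>\<^bsub>dsum\<^esub> x = x"
    by (simp add: dsum_mult dsum_one)
next
  fix x y
  show "x \<otimes>\<^bsub>dsum\<^esub> y = y \<otimes>\<^bsub>dsum\<^esub> x"
    by (simp add: dsum_mult add.commute)
qed

interpretation dsum: comm_group dsum
  by (rule comm_group_dsum)

lemma dsum_nat_pow: "x [^]\<^bsub>dsum\<^esub> (k::nat) = (\<lambda>j. take_bit (Suc j) (int k * x j))"
  by (induction k)
    (simp_all add: dsum_mult dsum_one take_bit_add_take_bit_left take_bit_add_take_bit_right
      distrib_right add.commute)

lemma dsum_inv:
  assumes "x \<in> dsum_carrier"
  shows "inv\<^bsub>dsum\<^esub> x = (\<lambda>j. take_bit (Suc j) (- x j))"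
proof (rule dsum.inv_equality)
  show "(\<lambda>j. take_bit (Suc j) (- x j)) \<in> carrier dsum"
    using dsum_carrier_smult[OF assms, of "-1"] by simp
qed (use assms in \<open>simp_all add: dsum_mult dsum_one take_bit_add_take_bit_left\<close>)

lemma countable_dsum_carrier: "countable dsum_carrier"
proof -
  have "dsum_carrier \<subseteq> range (\<lambda>xs j. if j < length xs then xs ! j else (0::int))"
  proof
    fix x assume "x \<in> dsum_carrier"
    then obtain N where N: "{j. x j \<noteq> 0} \<subseteq> {..<N}"
      using finite_support_dsum_carrier finite_nat_bounded by blast
    then have "x = (\<lambda>j. if j < length (map x [0..<N]) then map x [0..<N] ! j else 0)"
      by (auto simp: fun_eq_iff)
    then show "x \<in> range (\<lambda>xs j. if j < length xs then xs ! j else 0)"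
      by blast
  qed
  then show ?thesis
    by (rule countable_subset) simp
qed

definition trunc :: "nat \<Rightarrow> (nat \<Rightarrow> int) \<Rightarrow> nat \<Rightarrow> int" where
  "trunc n x = (\<lambda>j. take_bit n (x j))"

lemma trunc_dsum_carrier:
  assumes "x \<in> dsum_carrier"
  shows "trunc n x j = take_bit (min n (Suc j)) (x j)"
proof -
  have "trunc n x j = take_bit n (take_bit (Suc j) (x j))"
    using assms by (simp add: trunc_def dsum_carrier_take_bit)
  then show ?thesis
    by simp
qed

lemma trunc_Suc_dsum_carrier: "x \<in> dsum_carrier \<Longrightarrow> trunc (Suc j) x j = x j"
  by (simp add: trunc_def dsum_carrier_take_bit)

lemma trunc_trunc [simp]: "trunc n (trunc n x) = trunc n x"
  by (simp add: trunc_def)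

lemma trunc_in_dsum_carrier:
  assumes "x \<in> dsum_carrier"
  shows "trunc n x \<in> dsum_carrier"
proof (rule dsum_carrierI)
  fix j
  have "take_bit (Suc j) (trunc n x j) = take_bit (min n (Suc j)) (x j)"
    by (simp add: trunc_def min.commute)
  then show "take_bit (Suc j) (trunc n x j) = trunc n x j"
    using trunc_dsum_carrier[OF assms] by simp
  show "finite {j. trunc n x j \<noteq> 0}"
    by (rule finite_subset[OF _ finite_support_dsum_carrier[OF assms]]) (auto simp: trunc_def)
qed

lemma take_bit_eq_if_trunc_eq:
  assumes "trunc n x = trunc n y" "m \<le> n"
  shows "take_bit m (x j) = take_bit m (y j)"
proof -
  have "take_bit m (take_bit n (x j)) = take_bit m (take_bit n (y j))"
    using assms(1) by (metis trunc_def)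
  then show ?thesis
    using assms(2) by (simp add: min_absorb1)
qed

lemma trunc_mono:
  assumes "trunc n x = trunc n y" "m \<le> n"
  shows "trunc m x = trunc m y"
  using take_bit_eq_if_trunc_eq[OF assms] by (simp add: trunc_def)

lemma trunc_mult_cong:
  assumes "trunc n x = trunc n x'" "trunc n y = trunc n y'"
  shows "trunc n (x \<otimes>\<^bsub>dsum\<^esub> y) = trunc n (x' \<otimes>\<^bsub>dsum\<^esub> y')"
proof
  fix j
  let ?k = "min n (Suc j)"
  have "trunc n (x \<otimes>\<^bsub>dsum\<^esub> y) j = take_bit ?k (take_bit ?k (x j) + take_bit ?k (y j))"
    by (simp add: trunc_def dsum_mult take_bit_add)
  also have "\<dots> = take_bit ?k (take_bit ?k (x' j) + take_bit ?k (y' j))"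
    using take_bit_eq_if_trunc_eq[OF assms(1) min.cobounded1]
      take_bit_eq_if_trunc_eq[OF assms(2) min.cobounded1] by simp
  also have "\<dots> = trunc n (x' \<otimes>\<^bsub>dsum\<^esub> y') j"
    by (simp add: trunc_def dsum_mult take_bit_add)
  finally show "trunc n (x \<otimes>\<^bsub>dsum\<^esub> y) j = trunc n (x' \<otimes>\<^bsub>dsum\<^esub> y') j" .
qed

lemma trunc_mult_trunc: "trunc n (trunc n x \<otimes>\<^bsub>dsum\<^esub> trunc n y) = trunc n (x \<otimes>\<^bsub>dsum\<^esub> y)"
  by (rule trunc_mult_cong) simp_all

lemma trunc_inv_cong:
  assumes "x \<in> dsum_carrier" "x' \<in> dsum_carrier" "trunc n x = trunc n x'"
  shows "trunc n (inv\<^bsub>dsum\<^esub> x) = trunc n (inv\<^bsub>dsum\<^esub> x')"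
proof
  fix j
  let ?k = "min n (Suc j)"
  have "trunc n (inv\<^bsub>dsum\<^esub> x) j = take_bit ?k (- take_bit ?k (x j))"
    using assms(1) by (simp add: trunc_def dsum_inv take_bit_minus)
  also have "\<dots> = take_bit ?k (- take_bit ?k (x' j))"
    using take_bit_eq_if_trunc_eq[OF assms(3) min.cobounded1] by simp
  also have "\<dots> = trunc n (inv\<^bsub>dsum\<^esub> x') j"
    using assms(2) by (simp add: trunc_def dsum_inv take_bit_minus)
  finally show "trunc n (inv\<^bsub>dsum\<^esub> x) j = trunc n (inv\<^bsub>dsum\<^esub> x') j" .
qed

lemma trunc_inv_trunc:
  "x \<in> dsum_carrier \<Longrightarrow> trunc n (inv\<^bsub>dsum\<^esub> (trunc n x)) = trunc n (inv\<^bsub>dsum\<^esub> x)"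
  by (rule trunc_inv_cong) (simp_all add: trunc_in_dsum_carrier)

lemma trunc_one [simp]: "trunc n \<one>\<^bsub>dsum\<^esub> = (\<lambda>j. 0)"
  by (simp add: trunc_def dsum_one)

lemma trunc_pow_two_power: "trunc n (x [^]\<^bsub>dsum\<^esub> (2 ^ n :: nat)) = trunc n \<one>\<^bsub>dsum\<^esub>"
proof
  fix j
  have "(2::int) ^ min n (Suc j) dvd 2 ^ n * x j"
    by (simp add: le_imp_power_dvd dvd_mult2)
  then show "trunc n (x [^]\<^bsub>dsum\<^esub> (2 ^ n :: nat)) j = trunc n \<one>\<^bsub>dsum\<^esub> j"
    by (simp add: trunc_def dsum_nat_pow dsum_one take_bit_eq_0_iff)
qed

lemma pow_two_power_if_trunc_eq_one:
  assumes w: "w \<in> dsum_carrier" and "trunc n w = trunc n \<one>\<^bsub>dsum\<^esub>"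
  shows "\<exists>z\<in>dsum_carrier. w = z [^]\<^bsub>dsum\<^esub> (2 ^ n :: nat)"
proof
  have dvd: "2 ^ n dvd w j" for j
    using fun_cong[OF assms(2), of j] by (simp add: trunc_def dsum_one take_bit_eq_0_iff)
  show "(\<lambda>j. w j div 2 ^ n) \<in> dsum_carrier"
  proof (rule dsum_carrierI)
    fix j
    have "0 \<le> w j" "w j < 2 ^ Suc j"
      using dsum_carrier_take_bit[OF w, of j] by (simp_all add: take_bit_int_eq_self_iff)
    moreover have "w j div 2 ^ n \<le> w j"
      using \<open>0 \<le> w j\<close> by (cases "w j = 0") (simp_all add: int_div_le_self)
    ultimately show "take_bit (Suc j) (w j div 2 ^ n) = w j div 2 ^ n"
      by (simp add: take_bit_int_eq_self_iff pos_imp_zdiv_nonneg_iff)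
    show "finite {j. w j div 2 ^ n \<noteq> 0}"
      by (rule finite_subset[OF _ finite_support_dsum_carrier[OF w]]) auto
  qed
  show "w = (\<lambda>j. w j div 2 ^ n) [^]\<^bsub>dsum\<^esub> (2 ^ n :: nat)"
    using w dvd by (simp add: dsum_nat_pow)
qed

lemma trunc_eq_iff_coset:
  assumes x: "x \<in> dsum_carrier" and y: "y \<in> dsum_carrier"
  shows "trunc n y = trunc n x \<longleftrightarrow> (\<exists>z\<in>dsum_carrier. y = x \<otimes>\<^bsub>dsum\<^esub> z [^]\<^bsub>dsum\<^esub> (2 ^ n :: nat))"
proof
  assume eq: "trunc n y = trunc n x"
  let ?w = "inv\<^bsub>dsum\<^esub> x \<otimes>\<^bsub>dsum\<^esub> y"
  have "trunc n ?w = trunc n (inv\<^bsub>dsum\<^esub> x \<otimes>\<^bsub>dsum\<^esub> x)"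
    using eq by (intro trunc_mult_cong) simp_all
  also have "\<dots> = trunc n \<one>\<^bsub>dsum\<^esub>"
    using x by simp
  finally obtain z where z: "z \<in> dsum_carrier" "?w = z [^]\<^bsub>dsum\<^esub> (2 ^ n :: nat)"
    using pow_two_power_if_trunc_eq_one[of ?w n] x y
    by (metis carrier_dsum dsum.inv_closed dsum.m_closed)
  have "y = x \<otimes>\<^bsub>dsum\<^esub> ?w"
    using x y by (metis carrier_dsum dsum.inv_closed dsum.m_assoc dsum.r_inv dsum.l_one)
  then show "\<exists>z\<in>dsum_carrier. y = x \<otimes>\<^bsub>dsum\<^esub> z [^]\<^bsub>dsum\<^esub> (2 ^ n :: nat)"
    using z by auto
next
  assume "\<exists>z\<in>dsum_carrier. y = x \<otimes>\<^bsub>dsum\<^esub> z [^]\<^bsub>dsum\<^esub> (2 ^ n :: nat)"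
  then obtain z where "z \<in> dsum_carrier" "y = x \<otimes>\<^bsub>dsum\<^esub> z [^]\<^bsub>dsum\<^esub> (2 ^ n :: nat)"
    by blast
  moreover have "trunc n (x \<otimes>\<^bsub>dsum\<^esub> z [^]\<^bsub>dsum\<^esub> (2 ^ n :: nat)) = trunc n (x \<otimes>\<^bsub>dsum\<^esub> \<one>\<^bsub>dsum\<^esub>)"
    by (intro trunc_mult_cong trunc_pow_two_power refl)
  ultimately show "trunc n y = trunc n x"
    using x by simp
qed

section \<open>The topology\<close>

(* The subgroups 2^n G are the basic neighbourhoods of 0, see trunc_eq_iff_coset. *)
definition dsum_top :: "(nat \<Rightarrow> int) topology" where
  "dsum_top = pullback_topology dsum_carrier (\<lambda>x n. trunc n x)
                (product_topology (\<lambda>_. discrete_topology UNIV) UNIV)"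

lemma topspace_dsum_top [simp]: "topspace dsum_top = dsum_carrier"
  by (simp add: dsum_top_def topspace_pullback_topology)

lemma continuous_map_trunc: "continuous_map dsum_top (discrete_topology UNIV) (trunc n)"
  using continuous_map_pullback[OF continuous_map_product_projection[of n UNIV]]
  by (simp add: dsum_top_def comp_def)

lemma continuous_map_into_dsum_top:
  assumes "g \<in> topspace X \<rightarrow> dsum_carrier"
    and "\<And>n. continuous_map X (discrete_topology UNIV) (\<lambda>x. trunc n (g x))"
  shows "continuous_map X dsum_top g"
  unfolding dsum_top_def
  by (rule continuous_map_pullback') (use assms in \<open>auto simp: continuous_map_componentwise_UNIV\<close>)

lemma metrizable_dsum_top: "metrizable_space dsum_top"
proof -
  have "inj_on (\<lambda>x n. trunc n x) dsum_carrier"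
    by (rule inj_onI) (metis ext trunc_Suc_dsum_carrier)
  then have "dsum_top homeomorphic_space
      subtopology (product_topology (\<lambda>_. discrete_topology UNIV) UNIV)
        ((\<lambda>x n. trunc n x) ` dsum_carrier)"
    unfolding dsum_top_def
    by (intro homeomorphic_map_imp_homeomorphic_space[OF homeomorphic_map_pullback_topology]) auto
  moreover have "metrizable_space
      (product_topology (\<lambda>_ :: nat. discrete_topology (UNIV :: (nat \<Rightarrow> int) set)) UNIV)"
    by (simp add: metrizable_space_product_topology)
  ultimately show ?thesis
    using homeomorphic_metrizable_space metrizable_space_subtopology by blast
qed

lemma separable_dsum_top: "separable_space dsum_top"
  unfolding separable_space_def
  using countable_dsum_carrier closure_of_topspace[of dsum_top] by auto

lemma topological_group_dsum: "topological_group dsum dsum_top"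
  unfolding topological_group_def
proof (intro conjI)
  show "Hausdorff_space dsum_top"
    by (rule metrizable_imp_Hausdorff_space[OF metrizable_dsum_top])
  show "continuous_map (prod_topology dsum_top dsum_top) dsum_top (\<lambda>(x, y). x \<otimes>\<^bsub>dsum\<^esub> y)"
  proof (rule continuous_map_into_dsum_top)
    fix n
    have eq: "(\<lambda>p. trunc n (case p of (x, y) \<Rightarrow> x \<otimes>\<^bsub>dsum\<^esub> y)) =
          (\<lambda>(a, b). trunc n (a \<otimes>\<^bsub>dsum\<^esub> b)) \<circ> (\<lambda>(x, y). (trunc n x, trunc n y))"
      by (auto simp: fun_eq_iff trunc_mult_trunc)
    have "continuous_map (prod_topology dsum_top dsum_top) (discrete_topology (UNIV \<times> UNIV))
        (\<lambda>(x, y). (trunc n x, trunc n y))"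
      unfolding prod_topology_discrete_topology
      by (simp add: continuous_map_prod_top continuous_map_trunc)
    then show "continuous_map (prod_topology dsum_top dsum_top) (discrete_topology UNIV)
        (\<lambda>p. trunc n (case p of (x, y) \<Rightarrow> x \<otimes>\<^bsub>dsum\<^esub> y))"
      unfolding eq by (rule continuous_map_compose) simp
  qed (use dsum.m_closed in auto)
  show "continuous_map dsum_top dsum_top (\<lambda>x. inv\<^bsub>dsum\<^esub> x)"
  proof (rule continuous_map_into_dsum_top)
    fix n
    have "continuous_map dsum_top (discrete_topology UNIV) ((\<lambda>a. trunc n (inv\<^bsub>dsum\<^esub> a)) \<circ> trunc n)"
      by (rule continuous_map_compose[OF continuous_map_trunc]) (simp add: Pi_iff)
    then show "continuous_map dsum_top (discrete_topology UNIV) (\<lambda>x. trunc n (inv\<^bsub>dsum\<^esub> x))"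
      by (rule continuous_map_eq) (simp add: trunc_inv_trunc)
  qed (use dsum.inv_closed in auto)
qed (simp_all add: dsum.group_axioms)

definition trunc_nbhd :: "nat \<Rightarrow> (nat \<Rightarrow> int) \<Rightarrow> (nat \<Rightarrow> int) set" where
  "trunc_nbhd n x = {y \<in> dsum_carrier. trunc n y = trunc n x}"

lemma openin_trunc_nbhd: "openin dsum_top (trunc_nbhd n x)"
proof -
  have "trunc_nbhd n x = {y \<in> topspace dsum_top. trunc n y \<in> {trunc n x}}"
    by (auto simp: trunc_nbhd_def)
  moreover have "openin dsum_top {y \<in> topspace dsum_top. trunc n y \<in> {trunc n x}}"
    by (rule openin_continuous_map_preimage[OF continuous_map_trunc]) simp
  ultimately show ?thesis
    by simp
qed

lemma trunc_nbhd_subset_openin: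
  assumes "openin dsum_top U" "x \<in> U"
  obtains n where "trunc_nbhd n x \<subseteq> U"
proof -
  obtain V where V: "openin (product_topology (\<lambda>_. discrete_topology UNIV) UNIV) V"
    and U: "U = (\<lambda>x n. trunc n x) -` V \<inter> dsum_carrier"
    using assms(1) by (auto simp: dsum_top_def openin_pullback_topology)
  have "(\<lambda>n. trunc n x) \<in> V"
    using assms(2) U by blast
  then obtain W where W: "finite {i \<in> UNIV. W i \<noteq> topspace (discrete_topology UNIV)}"
    "(\<lambda>n. trunc n x) \<in> Pi\<^sub>E UNIV W" "Pi\<^sub>E UNIV W \<subseteq> V"
    using V unfolding openin_product_topology_alt by blast
  then have "finite {i. W i \<noteq> UNIV}"
    by simp
  then obtain N where N: "{i. W i \<noteq> UNIV} \<subseteq> {..<N}"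
    using finite_nat_bounded by blast
  have "y \<in> U" if y: "y \<in> trunc_nbhd N x" for y
  proof -
    have "trunc i y \<in> W i" for i
    proof (cases "i < N")
      case True
      have "trunc N y = trunc N x"
        using y by (simp add: trunc_nbhd_def)
      then have "trunc i y = trunc i x"
        by (rule trunc_mono) (use True in simp)
      then show ?thesis
        using W(2) by auto
    next
      case False
      then show ?thesis
        using N by auto
    qed
    then show "y \<in> U"
      using W(3) y U by (auto simp: trunc_nbhd_def PiE_UNIV_domain)
  qed
  then show thesis
    using that by blast
qed

lemma openin_dsum_top:
  "openin dsum_top U \<longleftrightarrow> U \<subseteq> dsum_carrier \<and> (\<forall>x\<in>U. \<exists>n. trunc_nbhd n x \<subseteq> U)"
proof
  assume U: "openin dsum_top U"
  then have "U \<subseteq> dsum_carrier"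
    using openin_subset by fastforce
  moreover have "\<exists>n. trunc_nbhd n x \<subseteq> U" if "x \<in> U" for x
    using trunc_nbhd_subset_openin[OF U that] by blast
  ultimately show "U \<subseteq> dsum_carrier \<and> (\<forall>x\<in>U. \<exists>n. trunc_nbhd n x \<subseteq> U)"
    by blast
next
  assume U: "U \<subseteq> dsum_carrier \<and> (\<forall>x\<in>U. \<exists>n. trunc_nbhd n x \<subseteq> U)"
  show "openin dsum_top U"
  proof (subst openin_subopen, intro ballI)
    fix x assume "x \<in> U"
    then obtain n where "trunc_nbhd n x \<subseteq> U"
      using U by blast
    moreover have "x \<in> trunc_nbhd n x"
      using U \<open>x \<in> U\<close> by (auto simp: trunc_nbhd_def)
    ultimately show "\<exists>T. openin dsum_top T \<and> x \<in> T \<and> T \<subseteq> U"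
      using openin_trunc_nbhd by blast
  qed
qed

lemma trunc_nbhd_in_subtopology:
  assumes "openin (subtopology dsum_top B) V" "x \<in> V"
  obtains n where "trunc_nbhd n x \<inter> B \<subseteq> V"
proof -
  obtain T where "openin dsum_top T" "V = T \<inter> B"
    using assms(1) by (auto simp: openin_subtopology)
  moreover obtain n where "trunc_nbhd n x \<subseteq> T"
    using trunc_nbhd_subset_openin calculation assms(2) by blast
  ultimately show ?thesis
    using that by blast
qed

(* trunc_nbhd n x is the coset of 2^n G containing x, and automorphisms preserve 2^n G. *)
lemma trunc_nbhd_subset_image_automorphism:
  assumes f: "f \<in> iso dsum dsum" and x: "x \<in> dsum_carrier"
  shows "trunc_nbhd n (f x) \<subseteq> f ` trunc_nbhd n x"
proof
  fix y assume y: "y \<in> trunc_nbhd n (f x)"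
  have hom: "f \<in> hom dsum dsum" and bij: "bij_betw f dsum_carrier dsum_carrier"
    using f by (auto simp: iso_def)
  have fx: "f x \<in> dsum_carrier"
    using bij x by (auto simp: bij_betw_def)
  obtain w where w: "w \<in> dsum_carrier" "y = f x \<otimes>\<^bsub>dsum\<^esub> w [^]\<^bsub>dsum\<^esub> (2 ^ n :: nat)"
    using y fx trunc_eq_iff_coset by (auto simp: trunc_nbhd_def)
  obtain z where z: "z \<in> dsum_carrier" "w = f z"
    using bij w(1) by (metis bij_betw_imp_surj_on imageE)
  have "f (x \<otimes>\<^bsub>dsum\<^esub> z [^]\<^bsub>dsum\<^esub> (2 ^ n :: nat)) = f x \<otimes>\<^bsub>dsum\<^esub> f (z [^]\<^bsub>dsum\<^esub> (2 ^ n :: nat))"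
    using x z by (intro hom_mult[OF hom]) (simp_all add: dsum.nat_pow_closed[simplified])
  also have "\<dots> = y"
    using z w by (simp add: hom_nat_pow[OF hom _ dsum.group_axioms dsum.group_axioms])
  finally have "y = f (x \<otimes>\<^bsub>dsum\<^esub> z [^]\<^bsub>dsum\<^esub> (2 ^ n :: nat))" ..
  moreover have "x \<otimes>\<^bsub>dsum\<^esub> z [^]\<^bsub>dsum\<^esub> (2 ^ n :: nat) \<in> dsum_carrier"
    using x z by (metis carrier_dsum dsum.m_closed dsum.nat_pow_closed)
  then have "x \<otimes>\<^bsub>dsum\<^esub> z [^]\<^bsub>dsum\<^esub> (2 ^ n :: nat) \<in> trunc_nbhd n x"
    using trunc_eq_iff_coset[OF x] z by (auto simp: trunc_nbhd_def)
  ultimately show "y \<in> f ` trunc_nbhd n x"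
    by blast
qed

lemma g_reversible_dsum: "g_reversible dsum dsum_top"
  unfolding g_reversible_def open_map_def
proof (intro allI impI, elim conjE)
  fix f U assume f: "f \<in> iso dsum dsum" and "openin dsum_top U"
  then have U: "U \<subseteq> dsum_carrier" "\<And>x. x \<in> U \<Longrightarrow> \<exists>n. trunc_nbhd n x \<subseteq> U"
    by (auto simp: openin_dsum_top)
  have "f ` U \<subseteq> dsum_carrier"
    using f U(1) by (auto simp: iso_def bij_betw_def)
  moreover have "\<exists>n. trunc_nbhd n y \<subseteq> f ` U" if "y \<in> f ` U" for y
  proof -
    obtain x where x: "x \<in> U" "y = f x"
      using \<open>y \<in> f ` U\<close> by blast
    then obtain n where "trunc_nbhd n x \<subseteq> U"
      using U(2) by blast
    then have "trunc_nbhd n y \<subseteq> f ` U"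
      using trunc_nbhd_subset_image_automorphism[OF f, of x n] x U(1) by blast
    then show ?thesis ..
  qed
  ultimately show "openin dsum_top (f ` U)"
    by (simp add: openin_dsum_top)
qed

definition bits :: "nat set \<Rightarrow> nat \<Rightarrow> int" where
  "bits S = (\<lambda>j. if j \<in> S then 2 ^ j else 0)"

lemma bits_in_dsum_carrier:
  assumes "finite S"
  shows "bits S \<in> dsum_carrier"
proof (rule dsum_carrierI)
  show "take_bit (Suc j) (bits S j) = bits S j" for j
    by (simp add: bits_def)
  show "finite {j. bits S j \<noteq> 0}"
    using assms by (simp add: bits_def)
qed

lemma support_bits [simp]: "{j. bits S j \<noteq> 0} = S"
  by (simp add: bits_def)

lemma bits_inject [simp]: "bits S = bits T \<longleftrightarrow> S = T"
  by (metis support_bits)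

lemma bits_empty: "bits {} = \<one>\<^bsub>dsum\<^esub>"
  by (simp add: bits_def dsum_one)

lemma take_bit_Suc_double_power: "take_bit (Suc j) (2 * 2 ^ j :: int) = 0"
  using take_bit_of_exp[of "Suc j" "Suc j", where ?'a = int] by (simp del: take_bit_of_exp)

lemma bits_mult: "bits S \<otimes>\<^bsub>dsum\<^esub> bits T = bits (sym_diff S T)"
  by (auto simp: fun_eq_iff bits_def dsum_mult take_bit_Suc_double_power)

lemma trunc_bits: "trunc n (bits S) = bits (S \<inter> {..<n})"
  by (auto simp: trunc_def bits_def)

lemma coordinate_of_order_two:
  fixes a :: int
  assumes "take_bit (Suc j) a = a" "take_bit (Suc j) (2 * a) = 0"
  shows "a = 0 \<or> a = 2 ^ j"
proof -
  have "2 ^ j dvd a"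
    using assms(2) by (simp add: take_bit_eq_0_iff)
  then obtain c where c: "a = 2 ^ j * c"
    by blast
  moreover have "0 \<le> a" "a < 2 * 2 ^ j"
    using assms(1) by (simp_all add: take_bit_int_eq_self_iff)
  ultimately have "0 \<le> c" "c < 2"
    by (simp_all add: zero_le_mult_iff mult.commute[of _ c])
  then show ?thesis
    using c by auto
qed

lemma two_torsion_dsum: "two_torsion dsum = bits ` {S. finite S}"
proof
  show "two_torsion dsum \<subseteq> bits ` {S. finite S}"
  proof
    fix x assume "x \<in> two_torsion dsum"
    then have x: "x \<in> dsum_carrier" and "x \<otimes>\<^bsub>dsum\<^esub> x = \<one>\<^bsub>dsum\<^esub>"
      by (auto simp: two_torsion_def)
    then have "take_bit (Suc j) (2 * x j) = 0" for j
      by (simp add: dsum_mult dsum_one fun_eq_iff)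
    then have "x j = 0 \<or> x j = 2 ^ j" for j
      using coordinate_of_order_two dsum_carrier_take_bit[OF x] by blast
    then have "x = bits {j. x j \<noteq> 0}"
      by (auto simp: bits_def fun_eq_iff)
    then show "x \<in> bits ` {S. finite S}"
      using finite_support_dsum_carrier[OF x] by blast
  qed
  show "bits ` {S. finite S} \<subseteq> two_torsion dsum"
  proof clarify
    fix S :: "nat set" assume "finite S"
    moreover have "bits S \<otimes>\<^bsub>dsum\<^esub> bits S = bits {}"
      by (simp add: bits_mult)
    ultimately show "bits S \<in> two_torsion dsum"
      by (simp add: two_torsion_def bits_in_dsum_carrier bits_empty)
  qed
qed

lemma two_torsion_dsum_subset: "two_torsion dsum \<subseteq> dsum_carrier"
  by (auto simp: two_torsion_def)

lemma trunc_nbhd_one_two_torsion: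
  "bits S \<in> trunc_nbhd n \<one>\<^bsub>dsum\<^esub> \<longleftrightarrow> finite S \<and> S \<inter> {..<n} = {}"
proof -
  have "bits S \<in> dsum_carrier \<longleftrightarrow> finite S"
    using bits_in_dsum_carrier finite_support_dsum_carrier by fastforce
  moreover have "trunc n (bits S) = trunc n (bits {}) \<longleftrightarrow> S \<inter> {..<n} = {}"
    by (simp only: trunc_bits Int_empty_left bits_inject)
  ultimately show ?thesis
    unfolding trunc_nbhd_def bits_empty[symmetric] by blast
qed

lemma two_torsion_dsum_eq_set_mult:
  "two_torsion dsum = bits ` Pow {..<n} <#>\<^bsub>dsum\<^esub> (trunc_nbhd n \<one>\<^bsub>dsum\<^esub> \<inter> two_torsion dsum)"
proof
  show "two_torsion dsum \<subseteq> bits ` Pow {..<n} <#>\<^bsub>dsum\<^esub> (trunc_nbhd n \<one>\<^bsub>dsum\<^esub> \<inter> two_torsion dsum)"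
  proof
    fix h assume "h \<in> two_torsion dsum"
    then obtain S where S: "finite S" "h = bits S"
      by (auto simp: two_torsion_dsum)
    have "sym_diff (S \<inter> {..<n}) (S - {..<n}) = S"
      by blast
    then have "h = bits (S \<inter> {..<n}) \<otimes>\<^bsub>dsum\<^esub> bits (S - {..<n})"
      using S(2) by (simp add: bits_mult)
    moreover have "bits (S - {..<n}) \<in> trunc_nbhd n \<one>\<^bsub>dsum\<^esub> \<inter> two_torsion dsum"
      using S(1) by (auto simp: trunc_nbhd_one_two_torsion two_torsion_dsum)
    ultimately show "h \<in> bits ` Pow {..<n} <#>\<^bsub>dsum\<^esub> (trunc_nbhd n \<one>\<^bsub>dsum\<^esub> \<inter> two_torsion dsum)"
      by (auto simp: set_mult_def)
  qed
  have "bits ` Pow {..<n} \<subseteq> two_torsion dsum"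
    by (auto simp: two_torsion_dsum intro: finite_subset)
  then show "bits ` Pow {..<n} <#>\<^bsub>dsum\<^esub> (trunc_nbhd n \<one>\<^bsub>dsum\<^esub> \<inter> two_torsion dsum) \<subseteq> two_torsion dsum"
    using subgroup.m_closed[OF dsum.subgroup_two_torsion] by (auto simp: set_mult_def)
qed

lemma precompact_two_torsion_dsum:
  "precompact_group (dsum\<lparr>carrier := two_torsion dsum\<rparr>) (subtopology dsum_top (two_torsion dsum))"
  unfolding precompact_group_def
proof (intro allI impI, elim conjE exE)
  fix U V
  assume U: "U \<subseteq> carrier (dsum\<lparr>carrier := two_torsion dsum\<rparr>)"
    and V: "openin (subtopology dsum_top (two_torsion dsum)) V"
      "\<one>\<^bsub>dsum\<lparr>carrier := two_torsion dsum\<rparr>\<^esub> \<in> V" "V \<subseteq> U"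
  have V': "openin (subtopology dsum_top (two_torsion dsum)) V" "\<one>\<^bsub>dsum\<^esub> \<in> V"
    using V by simp_all
  obtain n where "trunc_nbhd n \<one>\<^bsub>dsum\<^esub> \<inter> two_torsion dsum \<subseteq> V"
    by (rule trunc_nbhd_in_subtopology[OF V'])
  then have "two_torsion dsum \<subseteq> bits ` Pow {..<n} <#>\<^bsub>dsum\<^esub> U"
    using V(3) two_torsion_dsum_eq_set_mult[of n] mono_set_mult[of _ _ _ U dsum] by blast
  moreover have F: "bits ` Pow {..<n} \<subseteq> two_torsion dsum"
    by (auto simp: two_torsion_dsum intro: finite_subset)
  moreover have "bits ` Pow {..<n} <#>\<^bsub>dsum\<^esub> U \<subseteq> two_torsion dsum"
    using F U subgroup.m_closed[OF dsum.subgroup_two_torsion] by (auto simp: set_mult_def)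
  ultimately show "\<exists>F. finite F \<and> F \<subseteq> carrier (dsum\<lparr>carrier := two_torsion dsum\<rparr>) \<and>
      F <#>\<^bsub>dsum\<lparr>carrier := two_torsion dsum\<rparr>\<^esub> U = carrier (dsum\<lparr>carrier := two_torsion dsum\<rparr>)"
    by (intro exI[of _ "bits ` Pow {..<n}"]) (simp add: set_mult_def)
qed

section \<open>A continuous automorphism of the subgroup that is not open\<close>

definition xor_shift :: "nat set \<Rightarrow> nat set" where
  "xor_shift S = sym_diff S (Suc -` S)"

lemma mem_xor_shift: "j \<in> xor_shift S \<longleftrightarrow> (j \<in> S \<longleftrightarrow> Suc j \<notin> S)"
  by (auto simp: xor_shift_def)

lemma finite_xor_shift: "finite S \<Longrightarrow> finite (xor_shift S)"
  by (simp add: xor_shift_def finite_vimageI)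

lemma xor_shift_sym_diff: "xor_shift (sym_diff S T) = sym_diff (xor_shift S) (xor_shift T)"
  by (auto simp: xor_shift_def)

lemma xor_shift_eq_empty:
  assumes "finite S" "xor_shift S = {}"
  shows "S = {}"
proof (rule ccontr)
  assume "S \<noteq> {}"
  then have "Max S \<in> S"
    using assms(1) by simp
  then have "Suc (Max S) \<in> S"
    using assms(2) mem_xor_shift by blast
  then show False
    using Max_ge[OF assms(1)] by fastforce
qed

lemma xor_shift_inject:
  assumes "finite S" "finite T" "xor_shift S = xor_shift T"
  shows "S = T"
proof -
  have "finite (sym_diff S T)"
    using assms(1,2) by simp
  moreover have "xor_shift (sym_diff S T) = {}"
    unfolding xor_shift_sym_diff assms(3) by blast
  ultimately have "sym_diff S T = {}"
    by (rule xor_shift_eq_empty)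
  then show ?thesis
    by blast
qed

lemma card_upper_set_Suc:
  assumes "finite T"
  shows "card {i \<in> T. j \<le> i} = card {i \<in> T. Suc j \<le> i} + (if j \<in> T then 1 else 0)"
proof -
  have fin: "finite {i \<in> T. Suc j \<le> i}"
    using assms by simp
  show ?thesis
  proof (cases "j \<in> T")
    case True
    then have "{i \<in> T. j \<le> i} = insert j {i \<in> T. Suc j \<le> i}"
      by (auto simp: Suc_le_eq le_less)
    then show ?thesis
      using True fin by simp
  next
    case False
    then have "{i \<in> T. j \<le> i} = {i \<in> T. Suc j \<le> i}"
      by (auto simp: Suc_le_eq le_less)
    then show ?thesis
      using False by simp
  qed
qed

lemma xor_shift_surj:
  assumes "finite T"
  shows "\<exists>S. finite S \<and> xor_shift S = T"
proof (intro exI conjI)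
  let ?S = "{j. odd (card {i \<in> T. j \<le> i})}"
  have "?S \<subseteq> (\<Union>i\<in>T. {..i})"
  proof
    fix j assume "j \<in> ?S"
    then have "{i \<in> T. j \<le> i} \<noteq> {}"
      by (metis (no_types, lifting) card.empty even_zero mem_Collect_eq)
    then show "j \<in> (\<Union>i\<in>T. {..i})"
      by blast
  qed
  moreover have "finite (\<Union>i\<in>T. {..i})"
    using assms by simp
  ultimately show "finite ?S"
    by (rule finite_subset)
  have "j \<in> xor_shift ?S \<longleftrightarrow> j \<in> T" for j
    by (cases "j \<in> T") (simp_all add: mem_xor_shift card_upper_set_Suc[OF assms, of j])
  then show "xor_shift ?S = T"
    by blast
qed

lemma xor_shift_atMost: "xor_shift {..n} = {n}"
  by (auto simp: xor_shift_def)

lemma xor_shift_restrict: "xor_shift (S \<inter> {..<Suc n}) \<inter> {..<n} = xor_shift S \<inter> {..<n}"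
  by (auto simp: xor_shift_def)

(* Reading elements of order two as 0/1-sequences, twist x has entries x_j + x_(j+1) mod 2. *)
definition twist :: "(nat \<Rightarrow> int) \<Rightarrow> nat \<Rightarrow> int" where
  "twist x = bits (xor_shift {j. x j \<noteq> 0})"

lemma twist_bits: "twist (bits S) = bits (xor_shift S)"
  by (simp add: twist_def)

lemma twist_iso:
  "twist \<in> iso (dsum\<lparr>carrier := two_torsion dsum\<rparr>) (dsum\<lparr>carrier := two_torsion dsum\<rparr>)"
proof -
  have "twist \<in> hom (dsum\<lparr>carrier := two_torsion dsum\<rparr>) (dsum\<lparr>carrier := two_torsion dsum\<rparr>)"
    by (auto simp: hom_def two_torsion_dsum twist_bits bits_mult xor_shift_sym_diff
        finite_xor_shift)
  moreover have "inj_on twist (two_torsion dsum)"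
    by (auto simp: inj_on_def two_torsion_dsum twist_bits dest: xor_shift_inject)
  moreover have "twist ` two_torsion dsum = two_torsion dsum"
  proof
    show "twist ` two_torsion dsum \<subseteq> two_torsion dsum"
      by (auto simp: two_torsion_dsum twist_bits finite_xor_shift)
    show "two_torsion dsum \<subseteq> twist ` two_torsion dsum"
    proof
      fix y assume "y \<in> two_torsion dsum"
      then obtain T where T: "finite T" "y = bits T"
        by (auto simp: two_torsion_dsum)
      then obtain S where S: "finite S" "xor_shift S = T"
        using xor_shift_surj by blast
      have "y = twist (bits S)"
        using T(2) S(2) by (simp add: twist_bits)
      moreover have "bits S \<in> two_torsion dsum"
        using S(1) by (simp add: two_torsion_dsum)
      ultimately show "y \<in> twist ` two_torsion dsum"
        by (rule image_eqI)
    qed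
  qed
  ultimately show ?thesis
    by (simp add: iso_def bij_betw_def)
qed

lemma trunc_twist:
  assumes "x \<in> two_torsion dsum"
  shows "trunc n (twist (trunc (Suc n) x)) = trunc n (twist x)"
proof -
  obtain S where "x = bits S"
    using assms by (auto simp: two_torsion_dsum)
  then show ?thesis
    by (simp add: trunc_bits twist_bits xor_shift_restrict)
qed

lemma continuous_map_twist:
  "continuous_map (subtopology dsum_top (two_torsion dsum))
     (subtopology dsum_top (two_torsion dsum)) twist"
proof -
  have maps: "twist ` two_torsion dsum \<subseteq> two_torsion dsum"
    using twist_iso by (auto simp: iso_def bij_betw_def)
  have "continuous_map (subtopology dsum_top (two_torsion dsum)) dsum_top twist"
  proof (rule continuous_map_into_dsum_top)
    show "twist \<in> topspace (subtopology dsum_top (two_torsion dsum)) \<rightarrow> dsum_carrier"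
      using maps two_torsion_dsum_subset by auto
    fix n
    have "continuous_map (subtopology dsum_top (two_torsion dsum)) (discrete_topology UNIV)
        ((\<lambda>a. trunc n (twist a)) \<circ> trunc (Suc n))"
      by (rule continuous_map_compose[OF continuous_map_from_subtopology[OF continuous_map_trunc]])
        (simp add: Pi_iff)
    then show "continuous_map (subtopology dsum_top (two_torsion dsum)) (discrete_topology UNIV)
        (\<lambda>x. trunc n (twist x))"
      by (rule continuous_map_eq) (simp add: trunc_twist)
  qed
  then show ?thesis
    using maps by (auto simp: continuous_map_in_subtopology)
qed

lemma not_open_map_twist:
  "\<not> open_map (subtopology dsum_top (two_torsion dsum))
       (subtopology dsum_top (two_torsion dsum)) twist" (is "\<not> ?open")
proof
  assume op: ?open
  let ?V = "two_torsion dsum \<inter> trunc_nbhd 1 \<one>\<^bsub>dsum\<^esub>"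
  have "openin (subtopology dsum_top (two_torsion dsum)) ?V"
    by (rule openin_subtopology_Int2[OF openin_trunc_nbhd])
  then have "openin (subtopology dsum_top (two_torsion dsum)) (twist ` ?V)"
    using op by (simp add: open_map_def)
  moreover have "bits {} \<in> twist ` ?V"
  proof (rule image_eqI)
    show "bits {} = twist (bits {})"
      by (simp add: twist_bits xor_shift_def)
    show "bits {} \<in> ?V"
      by (simp add: two_torsion_dsum trunc_nbhd_one_two_torsion)
  qed
  ultimately obtain n where n: "trunc_nbhd n (bits {}) \<inter> two_torsion dsum \<subseteq> twist ` ?V"
    by (rule trunc_nbhd_in_subtopology)
  have "bits {n} \<in> trunc_nbhd n (bits {}) \<inter> two_torsion dsum"
    by (simp add: bits_empty trunc_nbhd_one_two_torsion two_torsion_dsum)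
  then obtain v where v: "v \<in> ?V" "bits {n} = twist v"
    using n by blast
  then obtain S where S: "finite S" "v = bits S" "0 \<notin> S"
    by (auto simp: two_torsion_dsum trunc_nbhd_one_two_torsion lessThan_Suc)
  then have "xor_shift S = xor_shift {..n}"
    using v(2) by (simp add: twist_bits xor_shift_atMost)
  then have "S = {..n}"
    using S(1) by (simp add: xor_shift_inject)
  then show False
    using S(3) by simp
qed

lemma not_g_reversible_two_torsion_dsum:
  "\<not> g_reversible (dsum\<lparr>carrier := two_torsion dsum\<rparr>) (subtopology dsum_top (two_torsion dsum))"
  unfolding g_reversible_def using twist_iso continuous_map_twist not_open_map_twist by blast

lemma g_reversible_with_bad_subgroup_dsum:
  "g_reversible_with_bad_subgroup dsum dsum_top (two_torsion dsum)"
  unfolding g_reversible_with_bad_subgroup_def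
  using topological_group_dsum separable_dsum_top metrizable_dsum_top g_reversible_dsum
    dsum.subgroup_two_torsion closedin_two_torsion[OF topological_group_dsum]
    countable_subset[OF two_torsion_dsum_subset countable_dsum_carrier]
    precompact_two_torsion_dsum not_g_reversible_two_torsion_dsum
  by blast

theorem corollary8p3:
  "\<exists>(G :: real monoid) (T :: real topology) H.
     topological_group G T \<and> separable_space T \<and> metrizable_space T \<and> g_reversible G T \<and>
     subgroup H G \<and> closedin T H \<and> countable H \<and>
     precompact_group (G\<lparr>carrier := H\<rparr>) (subtopology T H) \<and>
     \<not> g_reversible (G\<lparr>carrier := H\<rparr>) (subtopology T H)"
proof -
  obtain G :: "real monoid" and T f g
    where "monoid G" and iso: "topological_group_isomorphisms dsum dsum_top G T f g"
    by (rule real_copy_of_countable_group[of dsum dsum_top])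
      (simp_all add: dsum.is_monoid countable_dsum_carrier)
  have "g_reversible_with_bad_subgroup G T (f ` two_torsion dsum)"
    using iso \<open>monoid G\<close> g_reversible_with_bad_subgroup_dsum
    by (rule g_reversible_with_bad_subgroup_transfer)
  then show ?thesis
    unfolding g_reversible_with_bad_subgroup_def by blast
qed

end
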